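(* The group $\mathrm{GO}(S)^\circ$ acts freely on $\tau^{-1}(CZ_{r,n} \cup CZ_{r-1,n}) \subset \mathrm{Hom}(V,S)$.
   Context: Work over $\mathbb{C}$. Let $V = \mathbb{C}^n$, $r \le n$ even, $S = \mathbb{C}^r$ with a nondegenerate quadratic form $\omega_S$. $\mathrm{GO}(S)$ is the group of invertible linear $\phi: S\to S$ with $\omega_S(\phi v,\phi v) = \chi(\phi)\omega_S(v,v)$ for some $\chi(\phi)\in\mathbb{C}^*$. $\mathrm{GO}(S)$ acts on the orthogonal Grassmannian $\mathrm{OG}(r/2,S)$ of maximal isotropic subspaces, which has two connected components; $\mathrm{GO}(S)^\circ$ is the kernel of the induced homomorphism $\mathrm{GO}(S) \to \mu_2$. $\mathrm{GO}(S)$ acts on $\mathrm{Hom}(V,S)$ by $(\phi,f)\mapsto \phi\circ f$. Let $\tau: \mathrm{Hom}(V,S) \to \mathrm{Sym}^2 V^\vee$, $\tau(f)(v,w) = \omega_S(f(v),f(w))$. $CZ_{k,n} \subset \mathrm{Sym}^2 V^\vee$ is the set of quadratic forms of rank exactly $k$. *)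

theory Defs
  imports "HOL-Analysis.Analysis"
begin

text \<open>S = complex^'r with the symmetric bilinear form attached to a symmetric
  matrix Q; V = complex^'n; Hom(V,S) = r x n matrices acting by (*v).\<close>

definition omega :: "complex^'r^'r \<Rightarrow> complex^'r \<Rightarrow> complex^'r \<Rightarrow> complex" where
  "omega Q v w = (\<Sum>i\<in>UNIV. v $ i * (Q *v w) $ i)"

definition nondeg_form :: "complex^'r^'r \<Rightarrow> bool" where
  "nondeg_form Q \<longleftrightarrow> transpose Q = Q \<and> invertible Q"

definition GO :: "complex^'r^'r \<Rightarrow> (complex^'r^'r) set" where
  "GO Q = {phi. invertible phi \<and>
     (\<exists>c. c \<noteq> 0 \<and> (\<forall>v. omega Q (phi *v v) (phi *v v) = c * omega Q v v))}"

text \<open>Points of OG(r/2, S): maximal isotropic (complex) subspaces.\<close>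
definition max_isotropic :: "complex^'r^'r \<Rightarrow> (complex^'r) set \<Rightarrow> bool" where
  "max_isotropic Q L \<longleftrightarrow> vec.subspace L \<and> (\<forall>x\<in>L. \<forall>y\<in>L. omega Q x y = 0)
     \<and> 2 * vec.dim L = CARD('r)"

text \<open>Two maximal isotropic subspaces lie in the same connected component of
  OG(r/2,S) iff dim (L \<inter> L') \<equiv> r/2 (mod 2).\<close>
definition same_component :: "(complex^'r) set \<Rightarrow> (complex^'r) set \<Rightarrow> bool" where
  "same_component L L' \<longleftrightarrow> even (vec.dim (L \<inter> L') + CARD('r) div 2)"

text \<open>GO(S)^o: elements of GO(S) mapping every point of OG(r/2,S) into its own component.\<close>
definition GO0 :: "complex^'r^'r \<Rightarrow> (complex^'r^'r) set" where
  "GO0 Q = {phi \<in> GO Q. \<forall>L. max_isotropic Q L \<longrightarrow>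
              same_component L ((\<lambda>v. phi *v v) ` L)}"

text \<open>tau(f)(v,w) = omega(f v, f w), as the Gram matrix f^T Q f.\<close>
definition tau :: "complex^'r^'r \<Rightarrow> complex^'n^'r \<Rightarrow> complex^'n^'n" where
  "tau Q F = transpose F ** Q ** F"

definition CZ :: "nat \<Rightarrow> (complex^'n^'n) set" where
  "CZ k = {A. transpose A = A \<and> rank A = k}"

end

theory Submission
  imports Defs
begin

(*
  If phi F = F, then phi fixes the column span W of F pointwise. The rows of tau(F)
  are the images of the columns of F under the linear map w |-> omega(w, -)|_W, so
  rank tau(F) <= dim W, with equality only if omega is nondegenerate on W. Hence
  rank tau(F) >= r - 1 leaves two cases: W = S, and then phi = 1; or W is a nondegenerate
  hyperplane. A similitude fixing a nondegenerate hyperplane fixes an anisotropic vector, so it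
  is an isometry; it then acts on the line orthogonal to W by +1 or -1, i.e. it is the identity
  or the reflection s_u in that line. No reflection lies in GO(S)^o: extend an isotropic x with
  omega(x, u) <> 0 to a maximal isotropic subspace L (Witt); then L and s_u L meet exactly in
  the part of L orthogonal to u, of dimension r/2 - 1, so they lie in different components.

  Invariance of the locus is immediate from tau(phi F) = chi(phi) tau(F).
*)

section \<open>Symmetric bilinear forms\<close>

lemma omega_expand: "omega Q v w = (\<Sum>i\<in>UNIV. \<Sum>j\<in>UNIV. v$i * Q$i$j * w$j)"
  unfolding omega_def matrix_vector_mult_def by (simp add: sum_distrib_left mult.assoc)

lemma omega_add_left: "omega Q (v + v') w = omega Q v w + omega Q v' w"
  unfolding omega_def by (simp add: distrib_right sum.distrib)

lemma omega_add_right: "omega Q w (v + v') = omega Q w v + omega Q w v'"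
  unfolding omega_def by (simp add: vec.add distrib_left sum.distrib)

lemma omega_scale_left: "omega Q (c *s v) w = c * omega Q v w"
  unfolding omega_def by (simp add: sum_distrib_left mult.assoc)

lemma omega_scale_right: "omega Q w (c *s v) = c * omega Q w v"
  unfolding omega_def by (simp add: vec.scale sum_distrib_left mult.left_commute)

lemma omega_diff_left: "omega Q (v - v') w = omega Q v w - omega Q v' w"
  unfolding omega_def by (simp add: left_diff_distrib sum_subtractf)

lemma omega_diff_right: "omega Q w (v - v') = omega Q w v - omega Q w v'"
  unfolding omega_def by (simp add: vec.diff right_diff_distrib sum_subtractf)

lemma omega_zero_left [simp]: "omega Q 0 w = 0"
  unfolding omega_def by simp

lemma omega_zero_right [simp]: "omega Q w 0 = 0"
  unfolding omega_def by simp

lemmas omega_linear = omega_add_left omega_add_right omega_scale_left omega_scale_right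
  omega_diff_left omega_diff_right

lemma symmetric_entry: "transpose Q = Q \<Longrightarrow> Q$i$j = Q$j$i"
  by (metis transpose_def vec_lambda_beta)

lemma omega_commute: "transpose Q = Q \<Longrightarrow> omega Q v w = omega Q w v"
  unfolding omega_expand
  by (subst sum.swap) (simp add: symmetric_entry mult.commute mult.left_commute)

lemma omega_add_add:
  "transpose Q = Q \<Longrightarrow> omega Q (v + w) (v + w) = omega Q v v + 2 * omega Q v w + omega Q w w"
  using omega_commute[of Q w v] by (simp add: omega_linear)

lemma matrix_vector_mult_axis: "M *v axis j 1 = column j M"
  by (simp add: vec_eq_iff matrix_vector_mult_def axis_def column_def mult.commute if_distrib
      cong: if_cong)

lemma column_matrix_mult: "column i (A ** B) = A *v column i B"
  by (simp add: vec_eq_iff column_def matrix_matrix_mult_def matrix_vector_mult_def)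

lemma gram_matrix_entry: "(transpose M ** Q ** M)$i$j = omega Q (column i M) (column j M)"
proof -
  have "(transpose M ** Q ** M)$i$j = (\<Sum>k\<in>UNIV. (\<Sum>l\<in>UNIV. M$l$i * Q$l$k) * M$k$j)"
    by (simp add: matrix_matrix_mult_def transpose_def)
  also have "\<dots> = (\<Sum>l\<in>UNIV. \<Sum>k\<in>UNIV. M$l$i * Q$l$k * M$k$j)"
    by (simp add: sum_distrib_right, subst sum.swap, simp)
  finally show ?thesis unfolding omega_expand by (simp add: column_def)
qed

lemma omega_axis_axis: "omega Q (axis i 1) (axis j 1) = Q$i$j"
  using gram_matrix_entry[of "mat 1" Q i j]
  by (simp add: transpose_mat matrix_vector_mult_axis[symmetric])

lemma omega_axis_right: "transpose Q = Q \<Longrightarrow> omega Q z (axis j 1) = (Q *v z) $ j"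
  unfolding omega_def matrix_vector_mult_axis
  by (simp add: column_def matrix_vector_mult_def symmetric_entry mult.commute)

definition nondegenerate_on :: "complex^'r^'r \<Rightarrow> (complex^'r) set \<Rightarrow> bool" where
  "nondegenerate_on Q U \<longleftrightarrow> (\<forall>z\<in>U. (\<forall>w\<in>U. omega Q z w = 0) \<longrightarrow> z = 0)"

lemma nondegenerate_on_UNIV:
  assumes "nondeg_form Q" shows "nondegenerate_on Q UNIV"
  unfolding nondegenerate_on_def
proof (intro ballI impI)
  fix z assume z: "\<forall>w\<in>UNIV. omega Q z w = 0"
  have sym: "transpose Q = Q" and "invertible Q" using assms by (auto simp: nondeg_form_def)
  then obtain Q' where Q': "Q' ** Q = mat 1" unfolding invertible_def by blast
  have "Q *v z = 0" using z by (simp add: vec_eq_iff omega_axis_right[OF sym, symmetric])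
  then show "z = 0" using Q' by (metis matrix_vector_mul_assoc matrix_vector_mul_lid matrix_vector_mult_0_right)
qed

lemma omega_similitude_bilinear:
  assumes sym: "transpose Q = Q" and c: "\<forall>v. omega Q (phi *v v) (phi *v v) = c * omega Q v v"
  shows "omega Q (phi *v v) (phi *v w) = c * omega Q v w"
  using c[rule_format, of "v + w"] c
  by (simp add: vec.add omega_add_add[OF sym] algebra_simps)

section \<open>Orthogonal complements and isotropic subspaces\<close>

definition orth_in :: "complex^'r^'r \<Rightarrow> (complex^'r) set \<Rightarrow> complex^'r \<Rightarrow> (complex^'r) set" where
  "orth_in Q U b = {z\<in>U. omega Q z b = 0}"

lemma subspace_orth_in: "vec.subspace U \<Longrightarrow> vec.subspace (orth_in Q U b)"
  by (auto simp: orth_in_def vec.subspace_def omega_linear)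

lemma orth_in_subset: "orth_in Q U b \<subseteq> U"
  by (auto simp: orth_in_def)

lemma orth_in_hyperplane:
  assumes U: "vec.subspace U" and x: "x \<in> U" "omega Q x b \<noteq> 0"
  shows "vec.span (insert x (orth_in Q U b)) = U"
    and "vec.dim U = vec.dim (orth_in Q U b) + 1"
proof -
  let ?K = "orth_in Q U b"
  have K: "vec.subspace ?K" using subspace_orth_in[OF U] .
  have split: "z - (omega Q z b / omega Q x b) *s x \<in> ?K" if "z \<in> U" for z
    using that x U by (auto simp: orth_in_def omega_linear vec.subspace_diff vec.subspace_scale)
  show span: "vec.span (insert x ?K) = U"
  proof
    show "vec.span (insert x ?K) \<subseteq> U"
      using U x orth_in_subset by (intro vec.span_minimal) auto
    show "U \<subseteq> vec.span (insert x ?K)"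
      using split vec.span_breakdown_eq vec.span_base by blast
  qed
  have "vec.span ?K = ?K" using K vec.span_eq_iff by blast
  moreover have "x \<notin> ?K" using x by (simp add: orth_in_def)
  ultimately have "x \<notin> vec.span ?K" by metis
  then have "vec.dim (insert x ?K) = vec.dim ?K + 1"
    using vec.dim_insert[of x ?K] by simp
  then show "vec.dim U = vec.dim ?K + 1"
    by (metis span vec.dim_span)
qed

lemma nondegenerate_orth_in:
  assumes U: "vec.subspace U" and nd: "nondegenerate_on Q U"
    and b: "b \<in> U" "omega Q b b \<noteq> 0"
  shows "nondegenerate_on Q (orth_in Q U b)"
  unfolding nondegenerate_on_def
proof (intro ballI impI)
  fix z assume z: "z \<in> orth_in Q U b" and h: "\<forall>w\<in>orth_in Q U b. omega Q z w = 0"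
  have "omega Q z w = 0" if w: "w \<in> U" for w
  proof -
    let ?k = "omega Q w b / omega Q b b"
    have "w - ?k *s b \<in> orth_in Q U b"
      using w b U by (auto simp: orth_in_def omega_linear vec.subspace_diff vec.subspace_scale)
    then have "omega Q z (w - ?k *s b) = 0" using h by blast
    moreover have "omega Q z b = 0" using z by (simp add: orth_in_def)
    ultimately show ?thesis by (simp add: omega_linear)
  qed
  then show "z = 0" using nd z by (auto simp: nondegenerate_on_def orth_in_def)
qed

lemma nondegenerate_anisotropic_exists:
  assumes sym: "transpose Q = Q" and U: "vec.subspace U" and nd: "nondegenerate_on Q U"
    and ne: "U \<noteq> {0}"
  shows "\<exists>b\<in>U. omega Q b b \<noteq> 0"
proof (rule ccontr)
  assume "\<not> ?thesis"
  then have iso: "omega Q b b = 0" if "b \<in> U" for b using that by blast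
  obtain z where z: "z \<in> U" "z \<noteq> 0" using ne U vec.subspace_0 by blast
  then obtain w where w: "w \<in> U" "omega Q z w \<noteq> 0" using nd by (auto simp: nondegenerate_on_def)
  have "z + w \<in> U" using U z w by (simp add: vec.subspace_add)
  then have "omega Q (z + w) (z + w) = 0" by (rule iso)
  then have "2 * omega Q z w = 0"
    using omega_add_add[OF sym, of z w] iso[OF z(1)] iso[OF w(1)] by simp
  then show False using w(2) by simp
qed

lemma nondegenerate_isotropic_exists:
  assumes sym: "transpose Q = Q" and U: "vec.subspace U" and nd: "nondegenerate_on Q U"
    and a: "a \<in> U" "omega Q a a \<noteq> 0" and dim: "vec.dim U \<ge> 2"
  shows "\<exists>x\<in>U. omega Q x x = 0 \<and> omega Q x a \<noteq> 0"
proof -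
  let ?U1 = "orth_in Q U a"
  have "vec.dim ?U1 \<ge> 1" using orth_in_hyperplane(2)[OF U a] dim by simp
  then have "?U1 \<noteq> {0}" by (metis vec.dim_eq_0 order_refl not_one_le_zero)
  then obtain w where w: "w \<in> ?U1" "omega Q w w \<noteq> 0"
    using nondegenerate_anisotropic_exists[OF sym subspace_orth_in[OF U] nondegenerate_orth_in[OF U nd a]]
    by blast
  have wa: "omega Q w a = 0" "omega Q a w = 0"
    using w(1) omega_commute[OF sym, of a w] by (auto simp: orth_in_def)
  define t where "t = csqrt (- omega Q w w / omega Q a a)"
  have t2: "t * t = - omega Q w w / omega Q a a"
    unfolding t_def by (metis power2_csqrt power2_eq_square)
  have t: "t \<noteq> 0" using t2 w(2) a(2) by auto
  define x where "x = w + t *s a"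
  have "w \<in> U" using w(1) orth_in_subset by blast
  then have "x \<in> U" unfolding x_def using U a(1) by (simp add: vec.subspace_add vec.subspace_scale)
  moreover have "omega Q x x = omega Q w w + t * t * omega Q a a"
    unfolding x_def by (simp add: omega_linear wa algebra_simps)
  moreover have "omega Q x a = t * omega Q a a"
    unfolding x_def by (simp add: omega_linear wa)
  ultimately show ?thesis using t2 t a(2) by auto
qed

lemma hyperbolic_pair_complement:
  assumes sym: "transpose Q = Q" and U: "vec.subspace U" and nd: "nondegenerate_on Q U"
    and a: "a \<in> U" "omega Q a a \<noteq> 0"
    and x: "x \<in> U" "omega Q x x = 0" "omega Q x a \<noteq> 0"
  shows "\<exists>U2. vec.subspace U2 \<and> nondegenerate_on Q U2 \<and> U2 \<subseteq> U
    \<and> (\<forall>z\<in>U2. omega Q z a = 0 \<and> omega Q z x = 0) \<and> vec.dim U2 + 2 = vec.dim U"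
proof -
  let ?U1 = "orth_in Q U a"
  \<comment> \<open>x' is the part of x orthogonal to a; it is anisotropic, so it can be split off next.\<close>
  define k where "k = omega Q x a / omega Q a a"
  define x' where "x' = x - k *s a"
  have k: "k \<noteq> 0" "k * omega Q a a = omega Q x a" unfolding k_def using a x by auto
  have x'U1: "x' \<in> ?U1" unfolding x'_def orth_in_def using x a U k(2)
    by (auto simp: omega_linear vec.subspace_diff vec.subspace_scale)
  have "omega Q x' x' = omega Q x x - 2 * k * omega Q x a + k * (k * omega Q a a)"
    unfolding x'_def using omega_commute[OF sym, of a x] by (simp add: omega_linear algebra_simps)
  then have "omega Q x' x' = - k * omega Q x a" using x(2) k(2) by (simp add: algebra_simps)
  then have x'x': "omega Q x' x' \<noteq> 0" using k(1) x(3) by simp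
  let ?U2 = "orth_in Q ?U1 x'"
  have U1: "vec.subspace ?U1" "nondegenerate_on Q ?U1"
    using subspace_orth_in[OF U] nondegenerate_orth_in[OF U nd a] .
  show ?thesis
  proof (intro exI conjI ballI)
    show "vec.subspace ?U2" using subspace_orth_in[OF U1(1)] .
    show "nondegenerate_on Q ?U2" using nondegenerate_orth_in[OF U1 x'U1 x'x'] .
    show "?U2 \<subseteq> U" using orth_in_subset by blast
    fix z assume "z \<in> ?U2"
    then have za: "omega Q z a = 0" and "omega Q z x' = 0" by (auto simp: orth_in_def)
    moreover have "omega Q z x = omega Q z x' + k * omega Q z a"
      unfolding x'_def by (simp add: omega_linear)
    ultimately show "omega Q z a = 0" "omega Q z x = 0" by simp_all
  next
    show "vec.dim ?U2 + 2 = vec.dim U"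
      using orth_in_hyperplane(2)[OF U a] orth_in_hyperplane(2)[OF U1(1) x'U1 x'x'] by simp
  qed
qed

definition isotropic :: "complex^'r^'r \<Rightarrow> (complex^'r) set \<Rightarrow> bool" where
  "isotropic Q L \<longleftrightarrow> (\<forall>x\<in>L. \<forall>y\<in>L. omega Q x y = 0)"

lemma isotropic_span_insert:
  assumes sym: "transpose Q = Q" and L: "vec.subspace L" "isotropic Q L"
    and x: "omega Q x x = 0" "\<forall>l\<in>L. omega Q l x = 0"
  shows "isotropic Q (vec.span (insert x L))"
  unfolding isotropic_def
proof (intro ballI)
  have spL: "vec.span L = L" using L(1) vec.span_eq_iff by blast
  fix y z assume "y \<in> vec.span (insert x L)" "z \<in> vec.span (insert x L)"
  then obtain s t where ys: "y - s *s x \<in> L" and zt: "z - t *s x \<in> L"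
    using vec.span_breakdown_eq spL by metis
  define y' z' where "y' = y - s *s x" and "z' = z - t *s x"
  have "y = y' + s *s x" "z = z' + t *s x" unfolding y'_def z'_def by simp_all
  moreover have "omega Q y' z' = 0" using L(2) ys zt unfolding isotropic_def y'_def z'_def by blast
  moreover have "omega Q y' x = 0" "omega Q x z' = 0"
    using x(2) ys zt omega_commute[OF sym, of x z'] unfolding y'_def z'_def by auto
  ultimately show "omega Q y z = 0" by (simp add: omega_linear x(1))
qed

lemma nondegenerate_isotropic_half:
  assumes sym: "transpose Q = Q"
  shows "vec.subspace U \<Longrightarrow> nondegenerate_on Q U \<Longrightarrow>
    \<exists>L. vec.subspace L \<and> L \<subseteq> U \<and> isotropic Q L \<and> vec.dim L = vec.dim U div 2"
proof (induction "vec.dim U" arbitrary: U rule: less_induct)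
  case less
  show ?case
  proof (cases "vec.dim U \<le> 1")
    case True
    then show ?thesis using less.prems(1) vec.subspace_0
      by (intro exI[of _ "{0}"]) (auto simp: isotropic_def vec.subspace_def)
  next
    case False
    then have "U \<noteq> {0}" by auto
    then obtain a where a: "a \<in> U" "omega Q a a \<noteq> 0"
      using nondegenerate_anisotropic_exists[OF sym less.prems] by blast
    obtain x where x: "x \<in> U" "omega Q x x = 0" "omega Q x a \<noteq> 0"
      using nondegenerate_isotropic_exists[OF sym less.prems a] False by auto
    obtain U2 where U2: "vec.subspace U2" "nondegenerate_on Q U2" "U2 \<subseteq> U"
      "\<forall>z\<in>U2. omega Q z a = 0 \<and> omega Q z x = 0" "vec.dim U2 + 2 = vec.dim U"
      using hyperbolic_pair_complement[OF sym less.prems a x] by blast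
    obtain L where L: "vec.subspace L" "L \<subseteq> U2" "isotropic Q L" "vec.dim L = vec.dim U2 div 2"
      using less.hyps[of U2] U2 by auto
    have "x \<notin> L" using L(2) U2(4) x(3) by blast
    then have "x \<notin> vec.span L" using L(1) vec.span_eq_iff by metis
    then have "vec.dim (vec.span (insert x L)) = vec.dim U div 2"
      using vec.dim_insert[of x L] L(4) U2(5) by simp
    moreover have "vec.span (insert x L) \<subseteq> U"
      using less.prems(1) x(1) L(2) U2(3) by (intro vec.span_minimal) auto
    moreover have "isotropic Q (vec.span (insert x L))"
      using isotropic_span_insert[OF sym L(1) L(3) x(2)] L(2) U2(4) by blast
    ultimately show ?thesis using vec.subspace_span by blast
  qed
qed

lemma max_isotropic_containing:
  fixes Q :: "complex^'r^'r"
  assumes nf: "nondeg_form Q" and ev: "even CARD('r)"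
    and a: "omega Q a a \<noteq> 0" and x: "omega Q x x = 0" "omega Q x a \<noteq> 0"
  shows "\<exists>L. max_isotropic Q L \<and> x \<in> L"
proof -
  have sym: "transpose Q = Q" using nf by (simp add: nondeg_form_def)
  obtain U2 where U2: "vec.subspace U2" "nondegenerate_on Q U2"
      "\<forall>z\<in>U2. omega Q z a = 0 \<and> omega Q z x = 0" "vec.dim U2 + 2 = CARD('r)"
    using hyperbolic_pair_complement[OF sym vec.subspace_UNIV nondegenerate_on_UNIV[OF nf] _ a _ x]
    unfolding vec_dim_card by blast
  obtain L where L: "vec.subspace L" "L \<subseteq> U2" "isotropic Q L" "vec.dim L = vec.dim U2 div 2"
    using nondegenerate_isotropic_half[OF sym U2(1,2)] by blast
  have "x \<notin> L" using L(2) U2(3) x(2) by blast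
  then have "x \<notin> vec.span L" using L(1) vec.span_eq_iff by metis
  then have "vec.dim (vec.span (insert x L)) = vec.dim U2 div 2 + 1"
    using vec.dim_insert[of x L] L(4) by simp
  then have "2 * vec.dim (vec.span (insert x L)) = CARD('r)"
    using U2(4) ev by presburger
  moreover have "isotropic Q (vec.span (insert x L))"
    using isotropic_span_insert[OF sym L(1) L(3) x(1)] L(2) U2(3) by blast
  ultimately show ?thesis
    by (intro exI[of _ "vec.span (insert x L)"])
      (auto simp: max_isotropic_def isotropic_def vec.span_base)
qed

lemma nondegenerate_orthogonal_projection:
  assumes sym: "transpose Q = Q"
  shows "vec.subspace W \<Longrightarrow> nondegenerate_on Q W \<Longrightarrow> \<exists>p\<in>W. \<forall>w\<in>W. omega Q (a - p) w = 0"
proof (induction "vec.dim W" arbitrary: W a rule: less_induct)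
  case less
  show ?case
  proof (cases "W = {0}")
    case True
    then show ?thesis by auto
  next
    case False
    then obtain b where b: "b \<in> W" "omega Q b b \<noteq> 0"
      using nondegenerate_anisotropic_exists[OF sym less.prems] by blast
    let ?W' = "orth_in Q W b"
    define k where "k = omega Q a b / omega Q b b"
    have W': "vec.subspace ?W'" "nondegenerate_on Q ?W'" "vec.dim W = vec.dim ?W' + 1"
      using subspace_orth_in[OF less.prems(1)] nondegenerate_orth_in[OF less.prems b]
        orth_in_hyperplane(2)[OF less.prems(1) b] by auto
    obtain p' where p': "p' \<in> ?W'" "\<forall>w\<in>?W'. omega Q (a - k *s b - p') w = 0"
      using less.hyps[of ?W' "a - k *s b"] W' by auto
    have ortho_b: "omega Q (a - k *s b - p') b = 0"
      using p'(1) b(2) by (simp add: orth_in_def omega_linear k_def)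
    show ?thesis
    proof (intro bexI ballI)
      have "p' \<in> W" using p'(1) orth_in_subset by blast
      then show "p' + k *s b \<in> W" using b(1) less.prems(1)
        by (simp add: vec.subspace_add vec.subspace_scale)
      fix w assume "w \<in> W"
      then obtain t where "w - t *s b \<in> vec.span ?W'"
        using orth_in_hyperplane(1)[OF less.prems(1) b] vec.span_breakdown_eq by blast
      then have "w - t *s b \<in> ?W'" using W'(1) vec.span_eq_iff by blast
      then have "omega Q (a - k *s b - p') (w - t *s b) = 0" using p'(2) by blast
      then have "omega Q (a - k *s b - p') w = 0" using ortho_b by (simp add: omega_linear)
      moreover have "a - (p' + k *s b) = a - k *s b - p'" by (simp add: algebra_simps)
      ultimately show "omega Q (a - (p' + k *s b)) w = 0" by metis
    qed
  qed
qed

section \<open>Reflections\<close>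

definition reflection :: "complex^'r^'r \<Rightarrow> complex^'r \<Rightarrow> complex^'r \<Rightarrow> complex^'r" where
  "reflection Q u v = v - (2 * omega Q v u / omega Q u u) *s u"

lemma reflection_fixed_iff:
  assumes "omega Q u u \<noteq> 0"
  shows "reflection Q u v = v \<longleftrightarrow> omega Q v u = 0"
proof -
  have "u \<noteq> 0" using assms by auto
  then show ?thesis using assms by (simp add: reflection_def vec.scale_eq_0_iff)
qed

lemma isotropic_inter_reflection_image:
  assumes L: "vec.subspace L" "isotropic Q L" and u: "omega Q u u \<noteq> 0"
  shows "L \<inter> reflection Q u ` L = orth_in Q L u"
proof
  show "orth_in Q L u \<subseteq> L \<inter> reflection Q u ` L"
    using reflection_fixed_iff[OF u] by (force simp: orth_in_def)
  show "L \<inter> reflection Q u ` L \<subseteq> orth_in Q L u"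
  proof
    fix z assume "z \<in> L \<inter> reflection Q u ` L"
    then obtain y where z: "z \<in> L" and y: "y \<in> L" and zy: "z = reflection Q u y" by blast
    define c where "c = 2 * omega Q y u / omega Q u u"
    have "c *s u = y - z" using zy by (simp add: reflection_def c_def)
    then have "c *s u \<in> L" using y z L(1) vec.subspace_diff by metis
    then have "omega Q (c *s u) (c *s u) = 0" using L(2) by (simp add: isotropic_def)
    then have "c = 0" using u by (simp add: omega_linear)
    then have "omega Q y u = 0" and "z = y" using u zy by (auto simp: c_def reflection_def)
    then show "z \<in> orth_in Q L u" using y by (simp add: orth_in_def)
  qed
qed

lemma even_card_ge_2:
  assumes "even CARD('a::finite)"
  shows "CARD('a) \<ge> 2"
proof -
  have "CARD('a) \<noteq> 0" by simp
  then show ?thesis using assms by presburger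
qed

lemma reflection_notin_GO0:
  fixes Q :: "complex^'r^'r"
  assumes nf: "nondeg_form Q" and ev: "even CARD('r)"
    and u: "omega Q u u \<noteq> 0" and phi: "\<forall>v. phi *v v = reflection Q u v"
  shows "phi \<notin> GO0 Q"
proof
  assume "phi \<in> GO0 Q"
  have sym: "transpose Q = Q" using nf by (simp add: nondeg_form_def)
  have "vec.dim (UNIV :: (complex^'r) set) \<ge> 2"
    unfolding vec_dim_card by (rule even_card_ge_2[OF ev])
  then obtain x where x: "omega Q x x = 0" "omega Q x u \<noteq> 0"
    using nondegenerate_isotropic_exists[OF sym vec.subspace_UNIV nondegenerate_on_UNIV[OF nf] _ u]
    by blast
  obtain L where L: "max_isotropic Q L" "x \<in> L"
    using max_isotropic_containing[OF nf ev u x] by blast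
  then have Liso: "vec.subspace L" "isotropic Q L" "2 * vec.dim L = CARD('r)"
    by (auto simp: max_isotropic_def isotropic_def)
  have "(\<lambda>v. phi *v v) ` L = reflection Q u ` L" using phi by simp
  then have "L \<inter> (\<lambda>v. phi *v v) ` L = orth_in Q L u"
    using isotropic_inter_reflection_image[OF Liso(1,2) u] by simp
  moreover have "vec.dim L = vec.dim (orth_in Q L u) + 1"
    using orth_in_hyperplane(2)[OF Liso(1) L(2) x(2)] .
  ultimately have "vec.dim (L \<inter> (\<lambda>v. phi *v v) ` L) + CARD('r) div 2
      = 2 * vec.dim (orth_in Q L u) + 1"
    using Liso(3) by simp
  then have "\<not> same_component L ((\<lambda>v. phi *v v) ` L)"
    by (simp add: same_component_def)
  then show False using \<open>phi \<in> GO0 Q\<close> L(1) by (auto simp: GO0_def)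
qed

section \<open>Similitudes fixing a nondegenerate hyperplane\<close>

lemma span_eq_UNIV_if_dim_card:
  fixes S :: "('a::field^'n) set"
  assumes "vec.dim S = CARD('n)"
  shows "vec.span S = UNIV"
  using assms vec.dim_eq_full[of S] vec_dim_card vec.dim_UNIV vec.dimension_def by metis

lemma nondegenerate_hyperplane_normal:
  fixes Q :: "complex^'r^'r"
  assumes nf: "nondeg_form Q" and W: "vec.subspace W" "nondegenerate_on Q W"
    and dim: "vec.dim W + 1 = CARD('r)"
  obtains u where "omega Q u u \<noteq> 0" "\<forall>w\<in>W. omega Q u w = 0" "\<And>z. \<exists>t. z - t *s u \<in> W"
proof -
  have sym: "transpose Q = Q" using nf by (simp add: nondeg_form_def)
  have spW: "vec.span W = W" using W(1) vec.span_eq_iff by blast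
  have "W \<noteq> UNIV" using dim vec_dim_card by (metis Suc_eq_plus1 n_not_Suc_n)
  then obtain a where a: "a \<notin> W" by blast
  obtain p where p: "p \<in> W" "\<forall>w\<in>W. omega Q (a - p) w = 0"
    using nondegenerate_orthogonal_projection[OF sym W] by blast
  define u where "u = a - p"
  have u_orth: "\<forall>w\<in>W. omega Q u w = 0" using p(2) unfolding u_def by blast
  have "u \<notin> W" unfolding u_def using a p(1) W(1) by (metis diff_add_cancel vec.subspace_add)
  then have "u \<notin> vec.span W" using spW by metis
  then have "vec.dim (insert u W) = CARD('r)" using vec.dim_insert[of u W] dim by simp
  then have "vec.span (insert u W) = UNIV" by (rule span_eq_UNIV_if_dim_card)
  then have decompose: "\<exists>t. z - t *s u \<in> W" for z using vec.span_breakdown_eq spW by blast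
  have "omega Q u u \<noteq> 0"
  proof
    assume uu: "omega Q u u = 0"
    have "omega Q u z = 0" for z
    proof -
      obtain t where "z - t *s u \<in> W" using decompose by blast
      then have "omega Q u (z - t *s u) = 0" using u_orth by blast
      then show ?thesis using uu by (simp add: omega_linear)
    qed
    then have "u = 0" using nondegenerate_on_UNIV[OF nf] by (auto simp: nondegenerate_on_def)
    then show False using \<open>u \<notin> W\<close> W(1) vec.subspace_0 by blast
  qed
  then show ?thesis using that u_orth decompose by blast
qed

lemma GO_fixing_anisotropic_isometry:
  assumes sym: "transpose Q = Q" and phi: "phi \<in> GO Q"
    and w: "phi *v w = w" "omega Q w w \<noteq> 0"
  shows "omega Q (phi *v v) (phi *v v') = omega Q v v'"
proof -
  obtain c where c: "\<forall>v. omega Q (phi *v v) (phi *v v) = c * omega Q v v"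
    using phi by (auto simp: GO_def)
  then have "c = 1" using w c[rule_format, of w] by simp
  then show ?thesis using omega_similitude_bilinear[OF sym c] by simp
qed

lemma isometry_fixing_hyperplane_normal:
  assumes isometry: "\<And>v v'. omega Q (phi *v v) (phi *v v') = omega Q v v'"
    and W: "nondegenerate_on Q W" and fixed: "\<forall>w\<in>W. phi *v w = w"
    and u: "omega Q u u \<noteq> 0" "\<forall>w\<in>W. omega Q u w = 0" and t: "phi *v u - t *s u \<in> W"
  shows "phi *v u = t *s u \<and> (t = 1 \<or> t = -1)"
proof -
  have "omega Q (phi *v u - t *s u) w = 0" if "w \<in> W" for w
  proof -
    have "omega Q (phi *v u) w = omega Q (phi *v u) (phi *v w)" using fixed that by simp
    then show ?thesis using isometry u(2) that by (simp add: omega_linear)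
  qed
  then have phi_u: "phi *v u = t *s u" using W t by (auto simp: nondegenerate_on_def)
  have "omega Q u u = t * t * omega Q u u" using isometry[of u u] by (simp add: phi_u omega_linear)
  then show ?thesis using phi_u u(1) square_eq_1_iff[of t] by simp
qed

lemma GO_fixing_nondegenerate_hyperplane:
  fixes Q :: "complex^'r^'r"
  assumes nf: "nondeg_form Q" and phi: "phi \<in> GO Q" and r: "CARD('r) \<ge> 2"
    and W: "vec.subspace W" "nondegenerate_on Q W" and dim: "vec.dim W + 1 = CARD('r)"
    and fixed: "\<forall>w\<in>W. phi *v w = w"
  shows "phi = mat 1 \<or> (\<exists>u. omega Q u u \<noteq> 0 \<and> (\<forall>v. phi *v v = reflection Q u v))"
proof -
  have sym: "transpose Q = Q" using nf by (simp add: nondeg_form_def)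
  have "W \<noteq> {0}" using dim r by auto
  then obtain w0 where w0: "w0 \<in> W" "omega Q w0 w0 \<noteq> 0"
    using nondegenerate_anisotropic_exists[OF sym W] by blast
  have isometry: "omega Q (phi *v v) (phi *v v') = omega Q v v'" for v v'
    using GO_fixing_anisotropic_isometry[OF sym phi _ w0(2)] fixed w0(1) by blast
  obtain u where u: "omega Q u u \<noteq> 0" "\<forall>w\<in>W. omega Q u w = 0" "\<And>z. \<exists>t. z - t *s u \<in> W"
    using nondegenerate_hyperplane_normal[OF nf W dim] by blast
  obtain t where "phi *v u - t *s u \<in> W" using u(3) by blast
  then have phi_u: "phi *v u = t *s u" and "t = 1 \<or> t = -1"
    using isometry_fixing_hyperplane_normal[OF isometry W(2) fixed u(1,2)] by blast+
  have phi_v: "phi *v v = v - ((1 - t) * (omega Q v u / omega Q u u)) *s u" for v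
  proof -
    obtain s where s: "v - s *s u \<in> W" using u(3) by blast
    have "omega Q (v - s *s u) u = 0" using u(2) s omega_commute[OF sym] by metis
    then have s_eq: "s = omega Q v u / omega Q u u" using u(1) by (simp add: omega_linear field_simps)
    have "phi *v v = phi *v (v - s *s u) + s *s (phi *v u)"
      by (metis diff_add_cancel matrix_vector_right_distrib vec.scale)
    also have "\<dots> = (v - s *s u) + s *s (t *s u)" using fixed s phi_u by simp
    also have "\<dots> = v - ((1 - t) * s) *s u" by (simp add: vec_eq_iff algebra_simps)
    finally show ?thesis using s_eq by simp
  qed
  from \<open>t = 1 \<or> t = -1\<close> show ?thesis
  proof
    assume "t = 1"
    then show ?thesis using phi_v by (simp add: matrix_eq)
  next
    assume "t = -1"
    then show ?thesis using phi_v u(1) by (auto simp: reflection_def)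
  qed
qed

section \<open>The map tau\<close>

lemma transpose_mult_vector_entry:
  assumes "transpose Q = Q"
  shows "((transpose F ** Q) *v z)$j = omega Q z (column j F)"
proof -
  have "((transpose F ** Q) *v z)$j = (\<Sum>k\<in>UNIV. (\<Sum>l\<in>UNIV. F$l$j * Q$l$k) * z$k)"
    by (simp add: matrix_vector_mult_def matrix_matrix_mult_def transpose_def)
  also have "\<dots> = (\<Sum>k\<in>UNIV. \<Sum>l\<in>UNIV. z$k * Q$k$l * F$l$j)"
    using symmetric_entry[OF assms]
    by (simp add: sum_distrib_right mult.commute mult.left_commute, simp add: sum_distrib_left)
  finally show ?thesis unfolding omega_expand by (simp add: column_def)
qed

lemma rows_tau:
  assumes "transpose Q = Q"
  shows "rows (tau Q F) = (*v) (transpose F ** Q) ` columns F"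
proof -
  have "row i (tau Q F) = (transpose F ** Q) *v column i F" for i
    by (simp add: vec_eq_iff row_def tau_def gram_matrix_entry transpose_mult_vector_entry[OF assms])
  then show ?thesis by (auto simp: rows_def columns_def)
qed

lemma rank_tau_le_dim_columns: "transpose Q = Q \<Longrightarrow> rank (tau Q F) \<le> vec.dim (columns F)"
  unfolding row_rank_def_gen rows_tau by (rule vec.dim_image_le[OF matrix_vector_mul_linear_gen])

lemma inj_on_span_if_dim_image_eq:
  fixes A :: "'a::field^'n^'m"
  assumes dim: "vec.dim ((*v) A ` S) = vec.dim S"
  shows "inj_on ((*v) A) (vec.span S)"
proof -
  obtain B where B: "B \<subseteq> S" "vec.independent B" "S \<subseteq> vec.span B" "card B = vec.dim S"
    using vec.basis_exists by blast
  have fin: "finite B" using B(2) vec.finiteI_independent by blast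
  have span: "vec.span B = vec.span S"
    using B(1,3) by (metis vec.span_mono vec.span_span subset_antisym)
  have "vec.dim ((*v) A ` B) = card B"
    using dim B(4) by (metis span vec.dim_span vec.span_image)
  moreover have "vec.dim ((*v) A ` B) \<le> card ((*v) A ` B)"
    using fin by (intro vec.dim_le_card) (auto intro: vec.span_base)
  moreover have "card ((*v) A ` B) \<le> card B" using fin by (rule card_image_le)
  ultimately have card: "card ((*v) A ` B) = card B" and "vec.dim ((*v) A ` B) = card ((*v) A ` B)"
    by linarith+
  then have "vec.independent ((*v) A ` B)"
    using vec.card_eq_dim[OF order_refl _ finite_imageI[OF fin]] vec.span_superset by metis
  moreover have "inj_on ((*v) A) B" using eq_card_imp_inj_on[OF fin card] .
  ultimately show ?thesis using vec.inj_on_span_independent_image span by metis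
qed

lemma nondegenerate_on_column_span:
  assumes sym: "transpose Q = Q" and rank: "rank (tau Q F) = vec.dim (columns F)"
  shows "nondegenerate_on Q (vec.span (columns F))"
  unfolding nondegenerate_on_def
proof (intro ballI impI)
  let ?Phi = "(*v) (transpose F ** Q)"
  have inj: "inj_on ?Phi (vec.span (columns F))"
    using rank by (intro inj_on_span_if_dim_image_eq) (simp add: row_rank_def_gen rows_tau[OF sym])
  fix z assume z: "z \<in> vec.span (columns F)" and orth: "\<forall>w\<in>vec.span (columns F). omega Q z w = 0"
  have "column j F \<in> vec.span (columns F)" for j by (intro vec.span_base) (auto simp: columns_def)
  then have "?Phi z = ?Phi 0" using orth by (simp add: vec_eq_iff transpose_mult_vector_entry[OF sym])
  then show "z = 0" using inj z vec.span_zero by (blast dest: inj_onD)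
qed

lemma fixed_on_column_span:
  assumes "phi ** F = F" and "w \<in> vec.span (columns F)"
  shows "phi *v w = w"
proof -
  have "columns F \<subseteq> {w. phi *v w = w}"
    using assms(1) column_matrix_mult[of _ phi F] by (auto simp: columns_def)
  moreover have "vec.subspace {w. phi *v w = w}"
    by (auto simp: vec.subspace_def matrix_vector_right_distrib vec.scale)
  ultimately show ?thesis using assms(2) vec.span_minimal by blast
qed

lemma GO0_stabilizer_trivial:
  fixes Q :: "complex^'r^'r" and F :: "complex^'n^'r"
  assumes nf: "nondeg_form Q" and ev: "even CARD('r)" and phi: "phi \<in> GO0 Q"
    and rank: "CARD('r) \<le> rank (tau Q F) + 1" and fixed: "phi ** F = F"
  shows "phi = mat 1"
proof -
  have sym: "transpose Q = Q" using nf by (simp add: nondeg_form_def)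
  let ?W = "vec.span (columns F)"
  have fixW: "\<forall>w\<in>?W. phi *v w = w" using fixed_on_column_span[OF fixed] by blast
  have "rank (tau Q F) \<le> vec.dim (columns F)" using rank_tau_le_dim_columns[OF sym] .
  moreover have "vec.dim (columns F) \<le> CARD('r)" by (rule dim_subset_UNIV_cart_gen)
  ultimately consider "vec.dim (columns F) = CARD('r)"
    | "vec.dim (columns F) + 1 = CARD('r)" "rank (tau Q F) = vec.dim (columns F)"
    using rank by linarith
  then show ?thesis
  proof cases
    case 1
    then have "?W = UNIV" by (rule span_eq_UNIV_if_dim_card)
    then show ?thesis using fixW by (simp add: matrix_eq)
  next
    case 2
    have "phi \<in> GO Q" using phi by (simp add: GO0_def)
    then have "phi = mat 1 \<or> (\<exists>u. omega Q u u \<noteq> 0 \<and> (\<forall>v. phi *v v = reflection Q u v))"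
      using GO_fixing_nondegenerate_hyperplane[OF nf _ even_card_ge_2[OF ev] vec.subspace_span
          nondegenerate_on_column_span[OF sym 2(2)] _ fixW] 2(1)
      by (simp add: vec.dim_span)
    then show ?thesis using reflection_notin_GO0[OF nf ev] phi by blast
  qed
qed

definition scale_matrix :: "complex \<Rightarrow> complex^'m^'n \<Rightarrow> complex^'m^'n" where
  "scale_matrix c A = (\<chi> i j. c * A$i$j)"

lemma scale_matrix_mult_left: "A ** scale_matrix c B = scale_matrix c (A ** B)"
  by (simp add: scale_matrix_def matrix_matrix_mult_def vec_eq_iff sum_distrib_left mult.left_commute)

lemma scale_matrix_mult_right: "scale_matrix c B ** A = scale_matrix c (B ** A)"
  by (simp add: scale_matrix_def matrix_matrix_mult_def vec_eq_iff sum_distrib_left mult.assoc)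

lemma rank_scale_matrix:
  assumes "c \<noteq> 0"
  shows "rank (scale_matrix c A) = rank A"
proof -
  have "rows (scale_matrix c A) = (\<lambda>x. c *s x) ` rows A"
    by (auto simp: rows_def row_def scale_matrix_def vec_eq_iff)
  moreover have "inj (\<lambda>x. c *s x)"
    using assms by (auto intro!: inj_onI simp: vec_eq_iff)
  ultimately show ?thesis
    unfolding row_rank_def_gen by (metis vec.dim_image_eq[OF vec.linear_scale_self] inj_on_subset subset_UNIV)
qed

lemma transpose_scale_matrix: "transpose (scale_matrix c A) = scale_matrix c (transpose A)"
  by (simp add: scale_matrix_def transpose_def)

lemma scale_matrix_eq_iff: "c \<noteq> 0 \<Longrightarrow> scale_matrix c A = scale_matrix c B \<longleftrightarrow> A = B"
  by (auto simp: scale_matrix_def vec_eq_iff)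

lemma scale_matrix_in_CZ: "c \<noteq> 0 \<Longrightarrow> scale_matrix c A \<in> CZ k \<longleftrightarrow> A \<in> CZ k"
  by (simp add: CZ_def transpose_scale_matrix rank_scale_matrix scale_matrix_eq_iff)

lemma gram_similitude:
  assumes sym: "transpose Q = Q" and c: "\<forall>v. omega Q (phi *v v) (phi *v v) = c * omega Q v v"
  shows "transpose phi ** Q ** phi = scale_matrix c Q"
proof -
  have "(transpose phi ** Q ** phi)$i$j = c * Q$i$j" for i j
    using omega_similitude_bilinear[OF sym c, of "axis i 1" "axis j 1"]
    by (simp add: gram_matrix_entry omega_axis_axis matrix_vector_mult_axis)
  then show ?thesis by (simp add: vec_eq_iff scale_matrix_def)
qed

lemma tau_GO_action:
  assumes sym: "transpose Q = Q" and phi: "phi \<in> GO Q"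
  obtains c where "c \<noteq> 0" "tau Q (phi ** F) = scale_matrix c (tau Q F)"
proof -
  obtain c where c: "c \<noteq> 0" "\<forall>v. omega Q (phi *v v) (phi *v v) = c * omega Q v v"
    using phi by (auto simp: GO_def)
  have "tau Q (phi ** F) = transpose F ** (transpose phi ** Q ** phi) ** F"
    unfolding tau_def by (simp add: matrix_transpose_mul matrix_mul_assoc)
  also have "\<dots> = scale_matrix c (tau Q F)"
    by (simp only: gram_similitude[OF sym c(2)] scale_matrix_mult_left scale_matrix_mult_right
        tau_def matrix_mul_assoc)
  finally show ?thesis using that c(1) by blast
qed

theorem lemma2p6:
  fixes Q :: "complex^'r^'r"
  assumes "nondeg_form Q"
    and "even CARD('r)"
    and "CARD('r) \<le> CARD('n)"
  shows "(\<forall>phi\<in>GO0 Q. \<forall>F :: complex^'n^'r.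
            tau Q F \<in> CZ CARD('r) \<union> CZ (CARD('r) - 1) \<longrightarrow>
            tau Q (phi ** F) \<in> CZ CARD('r) \<union> CZ (CARD('r) - 1))
      \<and> (\<forall>phi\<in>GO0 Q. \<forall>F :: complex^'n^'r.
            tau Q F \<in> CZ CARD('r) \<union> CZ (CARD('r) - 1) \<longrightarrow>
            phi ** F = F \<longrightarrow> phi = mat 1)"
proof (intro conjI ballI allI impI)
  \<comment> \<open>The hypothesis r \<le> n only makes the locus nonempty.\<close>
  fix phi and F :: "complex^'n^'r"
  assume phi: "phi \<in> GO0 Q" and F: "tau Q F \<in> CZ CARD('r) \<union> CZ (CARD('r) - 1)"
  have "transpose Q = Q" "phi \<in> GO Q"
    using assms(1) phi by (simp_all add: nondeg_form_def GO0_def)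
  then obtain c where "c \<noteq> 0" "tau Q (phi ** F) = scale_matrix c (tau Q F)" by (rule tau_GO_action)
  then show "tau Q (phi ** F) \<in> CZ CARD('r) \<union> CZ (CARD('r) - 1)"
    using F by (simp add: scale_matrix_in_CZ)
next
  fix phi and F :: "complex^'n^'r"
  assume "phi \<in> GO0 Q" and F: "tau Q F \<in> CZ CARD('r) \<union> CZ (CARD('r) - 1)"
    and "phi ** F = F"
  moreover have "CARD('r) \<le> rank (tau Q F) + 1" using F by (auto simp: CZ_def)
  ultimately show "phi = mat 1" using GO0_stabilizer_trivial[OF assms(1,2)] by blast
qed

end
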